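(* (i) For positive real numbers $a\ne b$, \[ \left[\frac{\Gamma(b)}{\Gamma(a)}\right]^{1/(b-a)}<\sqrt{ab}\,\left(\frac{a}{b}\right)^{1/(2(b-a))} \] holds if $0<|b-a|<1$, and the reverse strict inequality holds if $|b-a|>1$. (ii) Let $c\ne 0$ be real, and let $\beta,\gamma$ be real parameters. Consider the double inequality \[ \frac{(k-1)!}{2}\left[\left(\frac{1}{b-a}+\beta\right)\frac{1}{a^k}+\left(\beta-\frac{1}{b-a}\right)\frac{1}{b^k}\right] <\frac{(-1)^{k-1}\left[\psi^{(k-1)}(b)-\psi^{(k-1)}(a)\right]}{b-a} <\frac{(k-1)!}{2}\left[\left(\frac{1}{b-a}+\gamma\right)\frac{1}{a^k}+\left(\gamma-\frac{1}{b-a}\right)\frac{1}{b^k}\right]. \] If $0<|c|<1$, this double inequality holds for all $k\in\mathbb{N}$ and all positive $a,b$ with $b-a=c$ if and only if $\beta\le 1$ and $\gamma\ge\frac{1}{|c|}$. If $|c|>1$, it holds for all $k\in\mathbb{N}$ and all positive $a,b$ with $b-a=c$ if and only if $\beta\le\frac{1}{|c|}$ and $\gamma\ge 1$.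
   Context: $\Gamma$ is Euler's gamma function, $\psi=\Gamma'/\Gamma$ is the digamma function, $\psi^{(0)}=\psi$ and $\psi^{(m)}$ denotes its $m$-th derivative; $\mathbb{N}=\{1,2,\dots\}$. Here $\gamma$ denotes a real parameter, not Euler's constant. *)

theory Defs
  imports "HOL-Analysis.Analysis"
begin

end

theory Submission
  imports Defs
begin

(* Let P be a function on (0, \<infinity>) with strictly increasing second derivative and put
     defect P a c = 2 (P (a + c) - P a) - (1 + c) \<Delta>P a + (1 - c) \<Delta>P (a + c),  \<Delta>P x = P (x + 1) - P x.
   With z = a + (1 + c)/2, m = (1 + c)/2, s = |1 - c|/2 and U t = P (z + t) - P (z - t), the defect
   is \<plusminus>2 (s U m - m U s).  As U 0 = 0 and U' is strictly increasing, U lies below its chords, so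
   the defect has the sign of 1 - c, and it is bounded by a second difference of P'.

   For P = - ln \<Gamma> we have \<Delta>P = - ln, and the sign of the defect is exactly the comparison (i).
   For P = (-1)^n \<psi>^(n) / n! we have \<Delta>P x = x^-(n+1), and for b = a + c the double inequality (ii)
   with k = n + 1 reads (\<beta> - 1) (a^-k + b^-k) < defect / c < (\<gamma> - 1) (a^-k + b^-k); this gives
   sufficiency.  For necessity, a \<rightarrow> \<infinity> (where the defect is O(a^-2) by a trigamma bound) forces
   \<beta> \<le> 1 when c < 1 and \<gamma> \<ge> 1 when c > 1, while a \<rightarrow> 0 (where \<psi> (a + c) - \<psi> a is
   1/a - 1/(a + c) + O(1)) forces \<gamma> \<ge> 1/c when c < 1 and \<beta> \<le> 1/c when c > 1.
   Negative c reduces to positive c by exchanging a and b. *)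

section \<open>Chord inequalities for an increasing second derivative\<close>

lemma chord_bounds_of_strict_mono_deriv:
  fixes U U' :: "real \<Rightarrow> real"
  assumes deriv: "\<And>t. 0 \<le> t \<Longrightarrow> t \<le> m \<Longrightarrow> (U has_real_derivative U' t) (at t)"
    and mono: "\<And>t1 t2. 0 \<le> t1 \<Longrightarrow> t1 < t2 \<Longrightarrow> t2 \<le> m \<Longrightarrow> U' t1 < U' t2"
    and U0: "U 0 = 0" and s: "0 < s" "s < m"
  shows "m * U s < s * U m" and "s * U m - m * U s \<le> s * (m - s) * (U' m - U' 0)"
proof -
  obtain x1 where x1: "0 < x1" "x1 < s" "U s - U 0 = (s - 0) * U' x1"
    using MVT2[OF s(1), of U U'] deriv s by auto
  obtain x2 where x2: "s < x2" "x2 < m" "U m - U s = (m - s) * U' x2"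
    using MVT2[OF s(2), of U U'] deriv s by auto
  have Us: "U s = s * U' x1"
    using x1(3) U0 by simp
  have Um: "U m = s * U' x1 + (m - s) * U' x2"
    using x2(3) Us by (simp add: algebra_simps)
  have key: "s * U m - m * U s = s * (m - s) * (U' x2 - U' x1)"
    unfolding Um Us by (simp add: algebra_simps)
  have pos: "0 < s * (m - s)"
    using s by simp
  have "U' x1 < U' x2"
    using mono x1 x2 by auto
  with pos have "0 < s * (m - s) * (U' x2 - U' x1)"
    by simp
  with key show "m * U s < s * U m"
    by linarith
  have "U' x2 - U' x1 \<le> U' m - U' 0"
    using mono[of x2 m] mono[of 0 x1] x1 x2 by fastforce
  with pos show "s * U m - m * U s \<le> s * (m - s) * (U' m - U' 0)"
    unfolding key by (simp add: mult_left_mono)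
qed

definition defect :: "(real \<Rightarrow> real) \<Rightarrow> real \<Rightarrow> real \<Rightarrow> real" where
  "defect P a c = 2 * (P (a + c) - P a) - (1 + c) * (P (a + 1) - P a) + (1 - c) * (P (a + c + 1) - P (a + c))"

locale increasing_second_deriv =
  fixes P P' P'' :: "real \<Rightarrow> real"
  assumes deriv: "\<And>x. x > 0 \<Longrightarrow> (P has_real_derivative P' x) (at x)"
    and deriv': "\<And>x. x > 0 \<Longrightarrow> (P' has_real_derivative P'' x) (at x)"
    and strict_mono: "\<And>x y. 0 < x \<Longrightarrow> x < y \<Longrightarrow> P'' x < P'' y"
begin

lemma symmetric_sum_strict_mono:
  assumes "0 \<le> t1" "t1 < t2" "t2 < z"
  shows "P' (z + t1) + P' (z - t1) < P' (z + t2) + P' (z - t2)"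
proof -
  obtain e1 where e1: "z + t1 < e1" "e1 < z + t2" "P' (z + t2) - P' (z + t1) = (t2 - t1) * P'' e1"
    using MVT2[of "z + t1" "z + t2" P' P''] deriv' assms by auto
  obtain e2 where e2: "z - t2 < e2" "e2 < z - t1" "P' (z - t1) - P' (z - t2) = (t2 - t1) * P'' e2"
    using MVT2[of "z - t2" "z - t1" P' P''] deriv' assms by auto
  have "P'' e2 < P'' e1"
    using strict_mono e1 e2 assms by auto
  then have "(t2 - t1) * P'' e2 < (t2 - t1) * P'' e1"
    using assms by simp
  with e1(3) e2(3) show ?thesis
    by (simp add: algebra_simps)
qed

lemma symmetric_difference_chord_bounds:
  assumes "0 < s" "s < m" "m < z"
  shows "m * (P (z + s) - P (z - s)) < s * (P (z + m) - P (z - m))"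
    and "s * (P (z + m) - P (z - m)) - m * (P (z + s) - P (z - s))
           \<le> s * (m - s) * (P' (z + m) + P' (z - m) - 2 * P' z)"
proof -
  define U where "U t = P (z + t) - P (z - t)" for t
  define U' where "U' t = P' (z + t) + P' (z - t)" for t
  have "(U has_real_derivative U' t) (at t)" if "0 \<le> t" "t \<le> m" for t
  proof -
    have "((\<lambda>t. P (z + t)) has_real_derivative P' (z + t) * 1) (at t)"
      by (rule DERIV_chain2[OF deriv]) (use that assms in \<open>auto intro!: derivative_eq_intros\<close>)
    moreover have "((\<lambda>t. P (z - t)) has_real_derivative P' (z - t) * (- 1)) (at t)"
      by (rule DERIV_chain2[OF deriv]) (use that assms in \<open>auto intro!: derivative_eq_intros\<close>)
    ultimately show ?thesis
      unfolding U_def[abs_def] U'_def using DERIV_diff by fastforce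
  qed
  moreover have "U' t1 < U' t2" if "0 \<le> t1" "t1 < t2" "t2 \<le> m" for t1 t2
    unfolding U'_def using symmetric_sum_strict_mono that assms by simp
  moreover have "U 0 = 0"
    by (simp add: U_def)
  ultimately have "m * U s < s * U m" "s * U m - m * U s \<le> s * (m - s) * (U' m - U' 0)"
    using chord_bounds_of_strict_mono_deriv assms by blast+
  then show "m * (P (z + s) - P (z - s)) < s * (P (z + m) - P (z - m))"
    and "s * (P (z + m) - P (z - m)) - m * (P (z + s) - P (z - s))
           \<le> s * (m - s) * (P' (z + m) + P' (z - m) - 2 * P' z)"
    by (simp_all add: U_def U'_def)
qed

lemma defect_bounds_lt_one:
  assumes "0 < a" "0 < c" "c < 1"
  shows "0 < defect P a c"
    and "defect P a c \<le> c * (1 - c) * (P' (a + c + 1) + P' a - 2 * P' (a + (1 + c) / 2))"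
proof -
  define z where "z = a + (1 + c) / 2"
  define m where "m = (1 + c) / 2"
  define s where "s = (1 - c) / 2"
  have pts: "z + s = a + 1" "z - s = a + c" "z + m = a + c + 1" "z - m = a"
    by (simp_all add: z_def m_def s_def field_simps)
  have "0 < s" "s < m" "m < z"
    using assms by (simp_all add: z_def m_def s_def)
  note chord = symmetric_difference_chord_bounds[OF this, unfolded pts, unfolded z_def]
  have eq: "defect P a c = 2 * (s * (P (a + c + 1) - P a) - m * (P (a + 1) - P (a + c)))"
    unfolding defect_def m_def s_def by (simp add: field_simps)
  have scale: "c * (1 - c) * (P' (a + c + 1) + P' a - 2 * P' (a + (1 + c) / 2))
      = 2 * (s * (m - s) * (P' (a + c + 1) + P' a - 2 * P' (a + (1 + c) / 2)))"
    by (simp add: m_def s_def field_simps)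
  show "0 < defect P a c"
    using chord(1) by (simp add: eq)
  show "defect P a c \<le> c * (1 - c) * (P' (a + c + 1) + P' a - 2 * P' (a + (1 + c) / 2))"
    using chord(2) by (simp add: eq scale)
qed

lemma defect_bounds_gt_one:
  assumes "0 < a" "1 < c"
  shows "defect P a c < 0"
    and "- defect P a c \<le> (c - 1) * (P' (a + c + 1) + P' a - 2 * P' (a + (1 + c) / 2))"
proof -
  define z where "z = a + (1 + c) / 2"
  define m where "m = (1 + c) / 2"
  define s where "s = (c - 1) / 2"
  have pts: "z + s = a + c" "z - s = a + 1" "z + m = a + c + 1" "z - m = a"
    by (simp_all add: z_def m_def s_def field_simps)
  have "0 < s" "s < m" "m < z"
    using assms by (simp_all add: z_def m_def s_def)
  note chord = symmetric_difference_chord_bounds[OF this, unfolded pts, unfolded z_def]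
  have eq: "defect P a c = - 2 * (s * (P (a + c + 1) - P a) - m * (P (a + c) - P (a + 1)))"
    unfolding defect_def m_def s_def by (simp add: field_simps)
  have scale: "(c - 1) * (P' (a + c + 1) + P' a - 2 * P' (a + (1 + c) / 2))
      = 2 * (s * (m - s) * (P' (a + c + 1) + P' a - 2 * P' (a + (1 + c) / 2)))"
    by (simp add: m_def s_def field_simps)
  show "defect P a c < 0"
    using chord(1) by (simp add: eq)
  show "- defect P a c \<le> (c - 1) * (P' (a + c + 1) + P' a - 2 * P' (a + (1 + c) / 2))"
    using chord(2) by (simp add: eq scale)
qed

end

section \<open>The Gamma quotient\<close>

lemma ln_Gamma_real_plus1:
  fixes x :: real
  assumes "x > 0"
  shows "ln_Gamma (x + 1) = ln_Gamma x + ln x"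
proof -
  have "Gamma (x + 1) = x * Gamma x"
    using assms by (intro Gamma_plus1) auto
  moreover have "Gamma x \<noteq> 0"
    using Gamma_real_pos[OF assms] by linarith
  ultimately show ?thesis
    using assms by (simp add: ln_Gamma_real_pos ln_mult)
qed

lemma neg_ln_Gamma_increasing_second_deriv:
  "increasing_second_deriv (\<lambda>x. - ln_Gamma x) (\<lambda>x. - Digamma x) (\<lambda>x. - Polygamma 1 x)"
proof (rule increasing_second_deriv.intro)
  fix x :: real
  assume "x > 0"
  then show "((\<lambda>x. - ln_Gamma x) has_real_derivative - Digamma x) (at x)"
    and "((\<lambda>x. - Digamma x) has_real_derivative - Polygamma 1 x) (at x)"
    by (auto intro!: derivative_eq_intros)
next
  fix x y :: real
  assume "0 < x" "x < y"
  then show "- Polygamma 1 x < - Polygamma 1 y"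
    using Polygamma_real_strict_antimono[of x y 1] by simp
qed

definition ln_Gamma_excess :: "real \<Rightarrow> real \<Rightarrow> real" where
  "ln_Gamma_excess a b = (ln_Gamma b - ln_Gamma a) / (b - a) - ((ln a + ln b) / 2 + (ln a - ln b) / (2 * (b - a)))"

lemma ln_Gamma_excess_commute: "a \<noteq> b \<Longrightarrow> ln_Gamma_excess a b = ln_Gamma_excess b a"
  unfolding ln_Gamma_excess_def by (simp add: field_simps)

lemma ln_Gamma_excess_eq_defect:
  assumes "0 < a" "0 < c"
  shows "c * ln_Gamma_excess a (a + c) = - defect (\<lambda>x. - ln_Gamma x) a c / 2"
  unfolding ln_Gamma_excess_def defect_def
  using assms ln_Gamma_real_plus1[of a] ln_Gamma_real_plus1[of "a + c"] by (simp add: field_simps)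

lemma ln_Gamma_excess_sign_add:
  assumes a: "0 < a" and c: "0 < c"
  shows "(c < 1 \<longrightarrow> ln_Gamma_excess a (a + c) < 0) \<and> (c > 1 \<longrightarrow> ln_Gamma_excess a (a + c) > 0)"
proof (intro conjI impI)
  assume "c < 1"
  with a c have "0 < defect (\<lambda>x. - ln_Gamma x) a c"
    by (rule increasing_second_deriv.defect_bounds_lt_one(1)[OF neg_ln_Gamma_increasing_second_deriv])
  with ln_Gamma_excess_eq_defect[OF a c] have "c * ln_Gamma_excess a (a + c) < 0"
    by simp
  with c show "ln_Gamma_excess a (a + c) < 0"
    by (simp add: mult_less_0_iff)
next
  assume "c > 1"
  with a have "defect (\<lambda>x. - ln_Gamma x) a c < 0"
    by (rule increasing_second_deriv.defect_bounds_gt_one(1)[OF neg_ln_Gamma_increasing_second_deriv])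
  with ln_Gamma_excess_eq_defect[OF a c] have "0 < c * ln_Gamma_excess a (a + c)"
    by simp
  with c show "0 < ln_Gamma_excess a (a + c)"
    by (simp add: zero_less_mult_iff)
qed

lemma ln_Gamma_excess_sign:
  assumes "0 < a" "0 < b" "a \<noteq> b"
  shows "(\<bar>b - a\<bar> < 1 \<longrightarrow> ln_Gamma_excess a b < 0) \<and> (\<bar>b - a\<bar> > 1 \<longrightarrow> ln_Gamma_excess a b > 0)"
proof (cases "a < b")
  case True
  then show ?thesis
    using ln_Gamma_excess_sign_add[of a "b - a"] assms by simp
next
  case False
  then show ?thesis
    using ln_Gamma_excess_sign_add[of b "a - b"] ln_Gamma_excess_commute[of a b] assms
    by (simp add: abs_minus_commute)
qed

lemma Gamma_quotient_powr_bounds: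
  fixes a b :: real
  assumes "0 < a" "0 < b" "a \<noteq> b"
  shows "(\<bar>b - a\<bar> < 1 \<longrightarrow>
           (Gamma b / Gamma a) powr (1 / (b - a)) < sqrt (a * b) * (a / b) powr (1 / (2 * (b - a)))) \<and>
         (\<bar>b - a\<bar> > 1 \<longrightarrow>
           (Gamma b / Gamma a) powr (1 / (b - a)) > sqrt (a * b) * (a / b) powr (1 / (2 * (b - a))))"
proof -
  have "(Gamma b / Gamma a) powr (1 / (b - a)) = exp ((ln_Gamma b - ln_Gamma a) / (b - a))"
    using assms Gamma_real_pos[of a] Gamma_real_pos[of b]
    by (simp add: powr_def ln_div ln_Gamma_real_pos less_imp_neq[symmetric])
  moreover have "sqrt (a * b) * (a / b) powr (1 / (2 * (b - a)))
      = exp ((ln a + ln b) / 2 + (ln a - ln b) / (2 * (b - a)))"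
    using assms by (simp add: powr_half_sqrt[symmetric] powr_def ln_mult ln_div exp_add)
  ultimately show ?thesis
    using ln_Gamma_excess_sign[OF assms] unfolding ln_Gamma_excess_def by auto
qed

section \<open>Polygamma differences\<close>

lemma nonpos_of_less_div_at_top:
  fixes x K :: real
  assumes "\<And>a. a > 0 \<Longrightarrow> x < K / a"
  shows "x \<le> 0"
proof (rule tendsto_lowerbound)
  show "((\<lambda>a. K / a) \<longlongrightarrow> 0) at_top"
    by (intro tendsto_divide_0[OF tendsto_const] filterlim_at_top_imp_at_infinity filterlim_ident)
  show "\<forall>\<^sub>F a in at_top. x \<le> K / a"
    using eventually_gt_at_top[of 0] by eventually_elim (use assms in \<open>auto intro: less_imp_le\<close>)
qed simp

lemma nonpos_of_less_mult_at_right_0: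
  fixes y K :: real
  assumes "\<And>a. 0 < a \<Longrightarrow> a < 1 \<Longrightarrow> y < K * a"
  shows "y \<le> 0"
proof (rule tendsto_lowerbound)
  show "((\<lambda>a. K * a) \<longlongrightarrow> 0) (at_right 0)"
    by (intro tendsto_mult_right_zero tendsto_ident_at)
  show "\<forall>\<^sub>F a in at_right 0. y \<le> K * a"
    using eventually_at_right_real[OF zero_less_one] by eventually_elim (use assms in \<open>auto intro: less_imp_le\<close>)
qed simp

lemma alternating_Polygamma_strict_mono:
  fixes x y :: real
  assumes "0 < x" "x < y"
  shows "(-1) ^ n * Polygamma n x < (-1) ^ n * Polygamma n y"
  using Polygamma_real_strict_mono[OF assms] Polygamma_real_strict_antimono[OF assms]
  by (cases "even n") auto

definition scaled_polygamma :: "nat \<Rightarrow> real \<Rightarrow> real" where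
  "scaled_polygamma n x = (-1) ^ n * Polygamma n x / fact n"

lemma scaled_polygamma_strict_mono:
  "0 < x \<Longrightarrow> x < y \<Longrightarrow> scaled_polygamma n x < scaled_polygamma n y"
  unfolding scaled_polygamma_def
  using alternating_Polygamma_strict_mono by (simp add: divide_strict_right_mono)

lemma scaled_polygamma_plus1:
  assumes "x > 0"
  shows "scaled_polygamma n (x + 1) = scaled_polygamma n x + 1 / x ^ Suc n"
proof -
  have "Polygamma n (x + 1) = Polygamma n x + (-1) ^ n * fact n / x ^ Suc n"
    using assms by (intro Polygamma_plus1) simp
  then have "scaled_polygamma n (x + 1) - scaled_polygamma n x
      = ((-1) ^ n * (-1) ^ n) * (fact n / fact n) / x ^ Suc n"
    unfolding scaled_polygamma_def by (simp add: field_simps)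
  also have "\<dots> = 1 / x ^ Suc n"
    by (simp flip: power_add)
  finally show ?thesis
    by simp
qed

lemma scaled_polygamma_increasing_second_deriv:
  "increasing_second_deriv (scaled_polygamma n)
     (\<lambda>x. (-1) ^ n * Polygamma (Suc n) x / fact n)
     (\<lambda>x. (-1) ^ n * Polygamma (Suc (Suc n)) x / fact n)"
proof (rule increasing_second_deriv.intro)
  fix x :: real
  assume "x > 0"
  then show "(scaled_polygamma n has_real_derivative (-1) ^ n * Polygamma (Suc n) x / fact n) (at x)"
    and "((\<lambda>x. (-1) ^ n * Polygamma (Suc n) x / fact n)
           has_real_derivative (-1) ^ n * Polygamma (Suc (Suc n)) x / fact n) (at x)"
    unfolding scaled_polygamma_def[abs_def] by (auto intro!: derivative_eq_intros)
next
  fix x y :: real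
  assume "0 < x" "x < y"
  then show "(-1) ^ n * Polygamma (Suc (Suc n)) x / fact n < (-1) ^ n * Polygamma (Suc (Suc n)) y / fact n"
    using alternating_Polygamma_strict_mono[of x y "Suc (Suc n)"] by (simp add: divide_strict_right_mono)
qed

lemma Polygamma_1_diff_le:
  fixes a :: real
  assumes "a > 0"
  shows "Polygamma 1 a - Polygamma 1 (a + real N) \<le> real N / a\<^sup>2"
proof (induction N)
  case (Suc N)
  have "Polygamma 1 (a + real N + 1) = Polygamma 1 (a + real N) - 1 / (a + real N)\<^sup>2"
    using assms Polygamma_plus1[of "a + real N" 1] by (simp add: power2_eq_square)
  moreover have "1 / (a + real N)\<^sup>2 \<le> 1 / a\<^sup>2"
    using assms by (intro divide_left_mono power_mono) auto
  ultimately show ?case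
    using Suc by (simp add: add_divide_distrib add_ac)
qed simp

lemma Polygamma_1_second_diff_le:
  fixes a c :: real
  assumes "a > 0" "c > 0"
  shows "Polygamma 1 (a + c + 1) + Polygamma 1 a - 2 * Polygamma 1 (a + (1 + c) / 2) \<le> (c + 2) / a\<^sup>2"
proof -
  define N where "N = nat \<lceil>c\<rceil> + 1"
  have N: "c + 1 \<le> real N" "real N \<le> c + 2"
    unfolding N_def using assms by linarith+
  have mid: "0 < a + (1 + c) / 2"
    using assms by (simp add: add_pos_nonneg)
  have "Polygamma 1 (a + c + 1) < Polygamma 1 (a + (1 + c) / 2)"
    using assms mid by (intro Polygamma_real_strict_antimono) auto
  moreover have "Polygamma 1 (a + real N) \<le> Polygamma 1 (a + (1 + c) / 2)"
    using Polygamma_real_strict_antimono[of "a + (1 + c) / 2" "a + real N" 1] mid N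
    by (cases "a + (1 + c) / 2 = a + real N") auto
  moreover have "real N / a\<^sup>2 \<le> (c + 2) / a\<^sup>2"
    using N by (simp add: divide_right_mono)
  ultimately show ?thesis
    using Polygamma_1_diff_le[OF assms(1), of N] by linarith
qed

definition polygamma_ineq :: "nat \<Rightarrow> real \<Rightarrow> real \<Rightarrow> real \<Rightarrow> real \<Rightarrow> bool" where
  "polygamma_ineq k \<beta> \<gamma> a b \<longleftrightarrow>
     fact (k - 1) / 2 * ((1 / (b - a) + \<beta>) / a ^ k + (\<beta> - 1 / (b - a)) / b ^ k)
       < (-1) ^ (k - 1) * (Polygamma (k - 1) b - Polygamma (k - 1) a) / (b - a)
     \<and> (-1) ^ (k - 1) * (Polygamma (k - 1) b - Polygamma (k - 1) a) / (b - a)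
       < fact (k - 1) / 2 * ((1 / (b - a) + \<gamma>) / a ^ k + (\<gamma> - 1 / (b - a)) / b ^ k)"

definition polygamma_ineq_gap :: "real \<Rightarrow> real \<Rightarrow> real \<Rightarrow> bool" where
  "polygamma_ineq_gap c \<beta> \<gamma> \<longleftrightarrow>
     (\<forall>k::nat. k \<ge> 1 \<longrightarrow> (\<forall>a b :: real. 0 < a \<longrightarrow> 0 < b \<longrightarrow> b - a = c \<longrightarrow> polygamma_ineq k \<beta> \<gamma> a b))"

lemma polygamma_ineq_sym: "polygamma_ineq k \<beta> \<gamma> a b \<longleftrightarrow> polygamma_ineq k \<beta> \<gamma> b a"
proof -
  have flip: "x * (p - q) / (b - a) = x * (q - p) / (a - b)" for x p q :: real
    by (cases "a = b") (simp_all add: field_simps)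
  have "1 / (a - b) = - (1 / (b - a))"
    by (metis minus_diff_eq divide_minus_right)
  then have swap: "(1 / (b - a) + t) / A + (t - 1 / (b - a)) / B
      = (1 / (a - b) + t) / B + (t - 1 / (a - b)) / A" for t A B :: real
    by simp
  show ?thesis
    unfolding polygamma_ineq_def flip[of _ "Polygamma (k - 1) b" "Polygamma (k - 1) a"] swap ..
qed

lemma polygamma_ineq_gap_uminus: "polygamma_ineq_gap (- c) \<beta> \<gamma> \<longleftrightarrow> polygamma_ineq_gap c \<beta> \<gamma>"
proof -
  have "polygamma_ineq_gap c \<beta> \<gamma>" if gap: "polygamma_ineq_gap (- c) \<beta> \<gamma>" for c
    unfolding polygamma_ineq_gap_def
  proof (intro allI impI)
    fix k :: nat and a b :: real
    assume "k \<ge> 1" "0 < a" "0 < b" "b - a = c"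
    moreover from \<open>b - a = c\<close> have "a - b = - c"
      by simp
    ultimately have "polygamma_ineq k \<beta> \<gamma> b a"
      using gap unfolding polygamma_ineq_gap_def by blast
    then show "polygamma_ineq k \<beta> \<gamma> a b"
      using polygamma_ineq_sym by blast
  qed
  from this[of c] this[of "- c"] show ?thesis
    by auto
qed

lemma polygamma_ineq_Suc_iff:
  assumes "c \<noteq> 0"
  shows "polygamma_ineq (Suc n) \<beta> \<gamma> a (a + c) \<longleftrightarrow>
    (1 / c + \<beta>) / a ^ Suc n + (\<beta> - 1 / c) / (a + c) ^ Suc n
      < 2 * (scaled_polygamma n (a + c) - scaled_polygamma n a) / c \<and>
    2 * (scaled_polygamma n (a + c) - scaled_polygamma n a) / c
      < (1 / c + \<gamma>) / a ^ Suc n + (\<gamma> - 1 / c) / (a + c) ^ Suc n"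
proof -
  have eq: "(-1) ^ n * (Polygamma n (a + c) - Polygamma n a) / c
      = fact n / 2 * (2 * (scaled_polygamma n (a + c) - scaled_polygamma n a) / c)"
    using assms by (simp add: scaled_polygamma_def field_simps)
  have pos: "(0::real) < fact n / 2"
    by simp
  show ?thesis
    unfolding polygamma_ineq_def diff_Suc_1 add_diff_cancel_left' eq mult_less_cancel_left_pos[OF pos] ..
qed

lemma polygamma_ineq_gapD:
  "polygamma_ineq_gap c \<beta> \<gamma> \<Longrightarrow> 0 < a \<Longrightarrow> 0 < a + c \<Longrightarrow> polygamma_ineq (Suc n) \<beta> \<gamma> a (a + c)"
  unfolding polygamma_ineq_gap_def by simp

lemma scaled_polygamma_bound_eq_defect:
  assumes "0 < a" "0 < a + c" "c \<noteq> 0"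
  shows "(1 / c + t) / a ^ Suc n + (t - 1 / c) / (a + c) ^ Suc n
    = 2 * (scaled_polygamma n (a + c) - scaled_polygamma n a) / c
      + (t - 1) * (1 / a ^ Suc n + 1 / (a + c) ^ Suc n) - defect (scaled_polygamma n) a c / c"
proof -
  define ha hb where "ha = 1 / a ^ Suc n" and "hb = 1 / (a + c) ^ Suc n"
  have defect_eq: "defect (scaled_polygamma n) a c
      = 2 * (scaled_polygamma n (a + c) - scaled_polygamma n a) - (1 + c) * ha + (1 - c) * hb"
    unfolding defect_def ha_def hb_def
    using scaled_polygamma_plus1[OF assms(1)] scaled_polygamma_plus1[OF assms(2)] by simp
  have "(1 / c + t) / a ^ Suc n + (t - 1 / c) / (a + c) ^ Suc n = (1 / c + t) * ha + (t - 1 / c) * hb"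
    by (simp add: ha_def hb_def)
  also have "\<dots> = 2 * (scaled_polygamma n (a + c) - scaled_polygamma n a) / c
      + (t - 1) * (ha + hb) - defect (scaled_polygamma n) a c / c"
    unfolding defect_eq using assms(3) by (simp add: field_simps)
  finally show ?thesis
    by (simp add: ha_def hb_def)
qed

lemma polygamma_ineq_gap_lt_oneI:
  assumes c: "0 < c" "c < 1" and "\<beta> \<le> 1" "1 / c \<le> \<gamma>"
  shows "polygamma_ineq_gap c \<beta> \<gamma>"
  unfolding polygamma_ineq_gap_def
proof (intro allI impI)
  fix k :: nat and a b :: real
  assume "k \<ge> 1" "0 < a" "0 < b" "b - a = c"
  then obtain n where k: "k = Suc n" and b: "b = a + c" and a: "0 < a"
    by (cases k) auto
  define ha hb where "ha = 1 / a ^ Suc n" and "hb = 1 / (a + c) ^ Suc n"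
  have "0 < ha" "0 < hb"
    using a c by (simp_all add: ha_def hb_def)
  have "(\<beta> - 1) * (ha + hb) \<le> 0"
    using \<open>\<beta> \<le> 1\<close> \<open>0 < ha\<close> \<open>0 < hb\<close> by (simp add: mult_nonpos_nonneg)
  moreover have "0 < defect (scaled_polygamma n) a c / c"
    using increasing_second_deriv.defect_bounds_lt_one(1)[OF scaled_polygamma_increasing_second_deriv a c] c
    by simp
  ultimately have lower: "(\<beta> - 1) * (ha + hb) < defect (scaled_polygamma n) a c / c"
    by linarith
  have "scaled_polygamma n (a + c) < scaled_polygamma n (a + 1)"
    using scaled_polygamma_strict_mono a c by simp
  then have "scaled_polygamma n (a + c) - scaled_polygamma n a < ha"
    using scaled_polygamma_plus1[OF a] by (simp add: ha_def)
  then have "2 * (scaled_polygamma n (a + c) - scaled_polygamma n a) / c < 2 * ha / c"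
    using c by (simp add: divide_strict_right_mono)
  also have "\<dots> \<le> (1 / c + \<gamma>) * ha"
    using \<open>1 / c \<le> \<gamma>\<close> \<open>0 < ha\<close> mult_right_mono[of "2 / c" "1 / c + \<gamma>" ha] by simp
  also have "\<dots> \<le> (1 / c + \<gamma>) * ha + (\<gamma> - 1 / c) * hb"
    using \<open>1 / c \<le> \<gamma>\<close> \<open>0 < hb\<close> by simp
  finally have upper: "2 * (scaled_polygamma n (a + c) - scaled_polygamma n a) / c
      < (1 / c + \<gamma>) * ha + (\<gamma> - 1 / c) * hb" .
  show "polygamma_ineq k \<beta> \<gamma> a b"
    using polygamma_ineq_Suc_iff[of c n \<beta> \<gamma> a] scaled_polygamma_bound_eq_defect[of a c \<beta> n] lower upper a c
    by (simp add: k b ha_def hb_def)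
qed

lemma polygamma_ineq_gap_gt_oneI:
  assumes c: "1 < c" and "\<beta> \<le> 1 / c" "1 \<le> \<gamma>"
  shows "polygamma_ineq_gap c \<beta> \<gamma>"
  unfolding polygamma_ineq_gap_def
proof (intro allI impI)
  fix k :: nat and a b :: real
  assume "k \<ge> 1" "0 < a" "0 < b" "b - a = c"
  then obtain n where k: "k = Suc n" and b: "b = a + c" and a: "0 < a"
    by (cases k) auto
  define ha hb where "ha = 1 / a ^ Suc n" and "hb = 1 / (a + c) ^ Suc n"
  have "0 < ha" "0 < hb"
    using a c by (simp_all add: ha_def hb_def)
  have "0 \<le> (\<gamma> - 1) * (ha + hb)"
    using \<open>1 \<le> \<gamma>\<close> \<open>0 < ha\<close> \<open>0 < hb\<close> by simp
  moreover have "defect (scaled_polygamma n) a c / c < 0"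
    using increasing_second_deriv.defect_bounds_gt_one(1)[OF scaled_polygamma_increasing_second_deriv a c] c
    by (simp add: divide_neg_pos)
  ultimately have upper: "defect (scaled_polygamma n) a c / c < (\<gamma> - 1) * (ha + hb)"
    by linarith
  have "(1 / c + \<beta>) * ha + (\<beta> - 1 / c) * hb \<le> (1 / c + \<beta>) * ha"
    using \<open>\<beta> \<le> 1 / c\<close> \<open>0 < hb\<close> by (simp add: mult_nonpos_nonneg)
  also have "\<dots> \<le> 2 * ha / c"
    using \<open>\<beta> \<le> 1 / c\<close> \<open>0 < ha\<close> mult_right_mono[of "1 / c + \<beta>" "2 / c" ha] by simp
  also have "\<dots> < 2 * (scaled_polygamma n (a + c) - scaled_polygamma n a) / c"
  proof -
    have "scaled_polygamma n (a + 1) < scaled_polygamma n (a + c)"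
      using scaled_polygamma_strict_mono a c by simp
    then have "ha < scaled_polygamma n (a + c) - scaled_polygamma n a"
      using scaled_polygamma_plus1[OF a] by (simp add: ha_def)
    then show ?thesis
      using c by (simp add: divide_strict_right_mono)
  qed
  finally have lower: "(1 / c + \<beta>) * ha + (\<beta> - 1 / c) * hb
      < 2 * (scaled_polygamma n (a + c) - scaled_polygamma n a) / c" .
  show "polygamma_ineq k \<beta> \<gamma> a b"
    using polygamma_ineq_Suc_iff[of c n \<beta> \<gamma> a] scaled_polygamma_bound_eq_defect[of a c \<gamma> n] lower upper a c
    by (simp add: k b ha_def hb_def)
qed

lemma polygamma_ineq_gap_lt_one_imp_beta:
  assumes c: "0 < c" "c < 1" and gap: "polygamma_ineq_gap c \<beta> \<gamma>"
  shows "\<beta> \<le> 1"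
proof (rule ccontr)
  assume "\<not> \<beta> \<le> 1"
  have "\<beta> - 1 < (1 - c) * (c + 2) / a" if a: "0 < a" for a
  proof -
    have "(\<beta> - 1) * (1 / a + 1 / (a + c)) < defect (scaled_polygamma 0) a c / c"
      using polygamma_ineq_gapD[OF gap a, of 0] polygamma_ineq_Suc_iff[of c 0 \<beta> \<gamma> a]
        scaled_polygamma_bound_eq_defect[of a c \<beta> 0] a c by simp
    also have "\<dots> \<le> (1 - c) * ((c + 2) / a\<^sup>2)"
    proof -
      have "defect (scaled_polygamma 0) a c
          \<le> c * (1 - c) * (Polygamma 1 (a + c + 1) + Polygamma 1 a - 2 * Polygamma 1 (a + (1 + c) / 2))"
        using increasing_second_deriv.defect_bounds_lt_one(2)[OF scaled_polygamma_increasing_second_deriv[of 0] a c]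
        by (simp add: One_nat_def)
      also have "\<dots> \<le> c * (1 - c) * ((c + 2) / a\<^sup>2)"
        using Polygamma_1_second_diff_le[OF a c(1)] c by (intro mult_left_mono) auto
      finally show ?thesis
        using c by (simp add: pos_divide_le_eq mult.commute mult.left_commute)
    qed
    finally have "(\<beta> - 1) * (1 / a + 1 / (a + c)) < (1 - c) * ((c + 2) / a\<^sup>2)" .
    moreover have "(\<beta> - 1) * (1 / a) \<le> (\<beta> - 1) * (1 / a + 1 / (a + c))"
      using \<open>\<not> \<beta> \<le> 1\<close> a c by (intro mult_left_mono) auto
    ultimately have "(\<beta> - 1) / a < ((1 - c) * (c + 2) / a) / a"
      by (simp add: power2_eq_square)
    with a show ?thesis
      by (simp only: divide_less_cancel)
  qed
  then have "\<beta> - 1 \<le> 0"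
    by (rule nonpos_of_less_div_at_top)
  with \<open>\<not> \<beta> \<le> 1\<close> show False
    by simp
qed

lemma polygamma_ineq_gap_lt_one_imp_gamma:
  assumes c: "0 < c" "c < 1" and gap: "polygamma_ineq_gap c \<beta> \<gamma>"
  shows "1 / c \<le> \<gamma>"
proof -
  have "1 - \<gamma> * c < (2 * \<gamma>) * a" if a: "0 < a" "a < 1" for a
  proof -
    have nonzero: "a \<noteq> 0" "c \<noteq> 0" "a + c \<noteq> 0"
      using a c by simp_all
    have "scaled_polygamma 0 (a + 1) < scaled_polygamma 0 (a + c + 1)"
      using scaled_polygamma_strict_mono a c by simp
    then have "1 / a - 1 / (a + c) < scaled_polygamma 0 (a + c) - scaled_polygamma 0 a"
      using scaled_polygamma_plus1[of a 0] scaled_polygamma_plus1[of "a + c" 0] a c by simp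
    then have "2 * (1 / a - 1 / (a + c)) / c < 2 * (scaled_polygamma 0 (a + c) - scaled_polygamma 0 a) / c"
      using c by (simp add: divide_strict_right_mono)
    also have "\<dots> < (1 / c + \<gamma>) / a + (\<gamma> - 1 / c) / (a + c)"
      using polygamma_ineq_gapD[OF gap, of a 0] polygamma_ineq_Suc_iff[of c 0 \<beta> \<gamma> a] a c by simp
    also have "\<dots> = (1 + 2 * \<gamma> * a + \<gamma> * c) / (a * (a + c))"
      using nonzero by (simp add: divide_simps) (simp add: algebra_simps)
    also have "2 * (1 / a - 1 / (a + c)) / c = 2 / (a * (a + c))"
      using nonzero by (simp add: divide_simps)
    finally have "2 / (a * (a + c)) < (1 + 2 * \<gamma> * a + \<gamma> * c) / (a * (a + c))" .
    with a c show ?thesis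
      by (simp only: divide_less_cancel) (simp add: add_pos_pos)
  qed
  then have "1 - \<gamma> * c \<le> 0"
    by (rule nonpos_of_less_mult_at_right_0)
  with c show ?thesis
    by (simp add: field_simps)
qed

lemma polygamma_ineq_gap_gt_one_imp_gamma:
  assumes c: "1 < c" and gap: "polygamma_ineq_gap c \<beta> \<gamma>"
  shows "1 \<le> \<gamma>"
proof (rule ccontr)
  assume "\<not> 1 \<le> \<gamma>"
  have "1 - \<gamma> < (c - 1) * (c + 2) / c / a" if a: "0 < a" for a
  proof -
    have "defect (scaled_polygamma 0) a c / c < (\<gamma> - 1) * (1 / a + 1 / (a + c))"
      using polygamma_ineq_gapD[OF gap a, of 0] polygamma_ineq_Suc_iff[of c 0 \<beta> \<gamma> a]
        scaled_polygamma_bound_eq_defect[of a c \<gamma> 0] a c by simp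
    also have "\<dots> \<le> (\<gamma> - 1) * (1 / a)"
      using \<open>\<not> 1 \<le> \<gamma>\<close> a c by (intro mult_left_mono_neg) auto
    also have "\<dots> = - ((1 - \<gamma>) / a)"
      by (simp add: minus_divide_left)
    finally have "(1 - \<gamma>) / a < - defect (scaled_polygamma 0) a c / c"
      by simp
    also have "\<dots> \<le> (c - 1) * ((c + 2) / a\<^sup>2) / c"
    proof -
      have "- defect (scaled_polygamma 0) a c
          \<le> (c - 1) * (Polygamma 1 (a + c + 1) + Polygamma 1 a - 2 * Polygamma 1 (a + (1 + c) / 2))"
        using increasing_second_deriv.defect_bounds_gt_one(2)[OF scaled_polygamma_increasing_second_deriv[of 0] a c]
        by (simp add: One_nat_def)
      also have "\<dots> \<le> (c - 1) * ((c + 2) / a\<^sup>2)"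
        using Polygamma_1_second_diff_le[of a c] a c by (intro mult_left_mono) auto
      finally show ?thesis
        by (rule divide_right_mono) (use c in simp)
    qed
    also have "\<dots> = ((c - 1) * (c + 2) / c / a) / a"
      by (simp add: power2_eq_square)
    finally have "(1 - \<gamma>) / a < ((c - 1) * (c + 2) / c / a) / a" .
    with a show ?thesis
      by (simp only: divide_less_cancel)
  qed
  then have "1 - \<gamma> \<le> 0"
    by (rule nonpos_of_less_div_at_top)
  with \<open>\<not> 1 \<le> \<gamma>\<close> show False
    by simp
qed

lemma polygamma_ineq_gap_gt_one_imp_beta:
  assumes c: "1 < c" and gap: "polygamma_ineq_gap c \<beta> \<gamma>"
  shows "\<beta> \<le> 1 / c"
proof (rule ccontr)
  assume "\<not> \<beta> \<le> 1 / c"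
  define K where "K = scaled_polygamma 0 (c + 2) - scaled_polygamma 0 1"
  have "(\<beta> - 1 / c) * c < (2 * K) * a" if a: "0 < a" "a < 1" for a
  proof -
    have nonzero: "a \<noteq> 0" "c \<noteq> 0" "a + c \<noteq> 0"
      using a c by simp_all
    have "scaled_polygamma 0 1 < scaled_polygamma 0 (a + 1)"
      "scaled_polygamma 0 (a + c + 1) < scaled_polygamma 0 (c + 2)"
      using scaled_polygamma_strict_mono a c by simp_all
    then have "scaled_polygamma 0 (a + c) - scaled_polygamma 0 a < 1 / a - 1 / (a + c) + K"
      using scaled_polygamma_plus1[of a 0] scaled_polygamma_plus1[of "a + c" 0] a c
      unfolding K_def by simp
    then have "2 * (scaled_polygamma 0 (a + c) - scaled_polygamma 0 a) / c < 2 * (1 / a - 1 / (a + c) + K) / c"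
      using c by (simp add: divide_strict_right_mono)
    moreover have "(1 / c + \<beta>) / a + (\<beta> - 1 / c) / (a + c)
        < 2 * (scaled_polygamma 0 (a + c) - scaled_polygamma 0 a) / c"
      using polygamma_ineq_gapD[OF gap, of a 0] polygamma_ineq_Suc_iff[of c 0 \<beta> \<gamma> a] a c by simp
    moreover have "2 * (1 / a - 1 / (a + c) + K) / c - ((1 / c + \<beta>) / a + (\<beta> - 1 / c) / (a + c))
        = 2 * K / c - ((\<beta> - 1 / c) / a + (\<beta> + 1 / c) / (a + c))"
      using nonzero by (simp add: divide_simps) (simp add: algebra_simps)
    ultimately have "(\<beta> - 1 / c) / a + (\<beta> + 1 / c) / (a + c) < 2 * K / c"
      by linarith
    moreover have "0 < (\<beta> + 1 / c) / (a + c)"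
    proof -
      have "0 < 1 / c"
        using c by simp
      with \<open>\<not> \<beta> \<le> 1 / c\<close> have "0 < \<beta> + 1 / c"
        by linarith
      with a c show ?thesis
        by simp
    qed
    ultimately have "(\<beta> - 1 / c) / a < 2 * K / c"
      by linarith
    then show ?thesis
      using a c by (simp add: field_simps)
  qed
  then have "(\<beta> - 1 / c) * c \<le> 0"
    by (rule nonpos_of_less_mult_at_right_0)
  with c \<open>\<not> \<beta> \<le> 1 / c\<close> show False
    by (simp add: mult_le_0_iff)
qed

lemma polygamma_ineq_gap_lt_one_iff:
  assumes "0 < c" "c < 1"
  shows "polygamma_ineq_gap c \<beta> \<gamma> \<longleftrightarrow> \<beta> \<le> 1 \<and> 1 / c \<le> \<gamma>"
  using polygamma_ineq_gap_lt_oneI polygamma_ineq_gap_lt_one_imp_beta polygamma_ineq_gap_lt_one_imp_gamma assms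
  by blast

lemma polygamma_ineq_gap_gt_one_iff:
  assumes "1 < c"
  shows "polygamma_ineq_gap c \<beta> \<gamma> \<longleftrightarrow> \<beta> \<le> 1 / c \<and> 1 \<le> \<gamma>"
  using polygamma_ineq_gap_gt_oneI polygamma_ineq_gap_gt_one_imp_beta polygamma_ineq_gap_gt_one_imp_gamma assms
  by blast

lemma polygamma_ineq_gap_iff:
  assumes "c \<noteq> 0"
  shows "(\<bar>c\<bar> < 1 \<longrightarrow> (polygamma_ineq_gap c \<beta> \<gamma> \<longleftrightarrow> \<beta> \<le> 1 \<and> \<gamma> \<ge> 1 / \<bar>c\<bar>)) \<and>
         (\<bar>c\<bar> > 1 \<longrightarrow> (polygamma_ineq_gap c \<beta> \<gamma> \<longleftrightarrow> \<beta> \<le> 1 / \<bar>c\<bar> \<and> \<gamma> \<ge> 1))"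
proof -
  have "polygamma_ineq_gap c \<beta> \<gamma> \<longleftrightarrow> polygamma_ineq_gap \<bar>c\<bar> \<beta> \<gamma>"
    using polygamma_ineq_gap_uminus[of c] by (simp add: abs_if)
  with assms show ?thesis
    using polygamma_ineq_gap_lt_one_iff[of "\<bar>c\<bar>"] polygamma_ineq_gap_gt_one_iff[of "\<bar>c\<bar>"] by auto
qed

theorem theorem3:
  shows "(\<forall>a b :: real. 0 < a \<longrightarrow> 0 < b \<longrightarrow> a \<noteq> b \<longrightarrow>
            (\<bar>b - a\<bar> < 1 \<longrightarrow>
               (Gamma b / Gamma a) powr (1 / (b - a))
                 < sqrt (a * b) * (a / b) powr (1 / (2 * (b - a)))) \<and>
            (\<bar>b - a\<bar> > 1 \<longrightarrow>
               (Gamma b / Gamma a) powr (1 / (b - a))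
                 > sqrt (a * b) * (a / b) powr (1 / (2 * (b - a)))))
   \<and>
   (\<forall>c \<beta> \<gamma> :: real. c \<noteq> 0 \<longrightarrow>
      (let DI = (\<forall>k::nat. k \<ge> 1 \<longrightarrow> (\<forall>a b :: real. 0 < a \<longrightarrow> 0 < b \<longrightarrow> b - a = c \<longrightarrow>
                  fact (k - 1) / 2 * ((1 / (b - a) + \<beta>) / a ^ k + (\<beta> - 1 / (b - a)) / b ^ k)
                    < (-1) ^ (k - 1) * (Polygamma (k - 1) b - Polygamma (k - 1) a) / (b - a)
                  \<and> (-1) ^ (k - 1) * (Polygamma (k - 1) b - Polygamma (k - 1) a) / (b - a)
                    < fact (k - 1) / 2 * ((1 / (b - a) + \<gamma>) / a ^ k + (\<gamma> - 1 / (b - a)) / b ^ k)))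
       in (\<bar>c\<bar> < 1 \<longrightarrow> (DI \<longleftrightarrow> \<beta> \<le> 1 \<and> \<gamma> \<ge> 1 / \<bar>c\<bar>)) \<and>
          (\<bar>c\<bar> > 1 \<longrightarrow> (DI \<longleftrightarrow> \<beta> \<le> 1 / \<bar>c\<bar> \<and> \<gamma> \<ge> 1))))"
  unfolding Let_def
  using Gamma_quotient_powr_bounds polygamma_ineq_gap_iff[unfolded polygamma_ineq_gap_def polygamma_ineq_def]
  by blast

end
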